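(* Let $X$ and $Y$ be join semilattices. Then $(X,Y)$ is a Morita pair between some m-regular m-semilattices if and only if there exist surjective join semilattice morphisms $p: X\otimes Y\otimes X\to X$ and $q: Y\otimes X\otimes Y\to Y$ such that, for all $x_1,x_2,x_3\in X$ and $y_1,y_2,y_3\in Y$: 1. $p(p(x_1\otimes y_1\otimes x_2)\otimes y_2\otimes x_3)=p(x_1\otimes q(y_1\otimes x_2\otimes y_2)\otimes x_3)=p(x_1\otimes y_1\otimes p(x_2\otimes y_2\otimes x_3))$; 2. $q(q(y_1\otimes x_1\otimes y_2)\otimes x_2\otimes y_3)=q(y_1\otimes p(x_1\otimes y_2\otimes x_2)\otimes y_3)=q(y_1\otimes x_1\otimes q(y_2\otimes x_2\otimes y_3))$; 3. if $p(u\otimes v\otimes x_1)=p(u\otimes v\otimes x_2)$ for all $u\in X$, $v\in Y$, then $x_1=x_2$; 4. if $p(x_1\otimes v\otimes u)=p(x_2\otimes v\otimes u)$ for all $u\in X$, $v\in Y$, then $x_1=x_2$; 5. if $q(v\otimes u\otimes y_1)=q(v\otimes u\otimes y_2)$ for all $v\in Y$, $u\in X$, then $y_1=y_2$; 6. if $q(y_1\otimes u\otimes v)=q(y_2\otimes u\otimes v)$ for all $u\in X$, $v\in Y$, then $y_1=y_2$.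
   Context: A join semilattice is a poset with all finite joins (including the empty join $0$); morphisms preserve finite joins. $\otimes$ denotes the tensor product of join semilattices (universal for maps preserving finite joins in each variable). An m-semilattice is a join semilattice with an associative multiplication distributing over finite joins on both sides. Modules over an m-semilattice $A$ are join semilattices $M$ with an action $M\times A\to M$ satisfying $m\cdot(ab)=(m\cdot a)\cdot b$ and preserving finite joins in each variable (left modules dually). A right module is essential if every element is a finite join of elements $m\cdot a$, separated if ($m\cdot a=n\cdot a$ for all $a$) implies $m=n$, m-regular if both; dually on the left; an m-regular $A,B$-bimodule is an m-regular left $A$-module and m-regular right $B$-module with commuting actions; an m-semilattice is m-regular if it is m-regular as a bimodule over itself. A Morita context between m-regular m-semilattices $A,B$ is $(A,B,X,Y,(-,-),[-,-])$ with $X$ an m-regular $A,B$-bimodule, $Y$ an m-regular $B,A$-bimodule, and bimodule maps $(-,-):X\times Y\to A$, $[-,-]:Y\times X\to B$ satisfying $(x\cdot b,y)=(x,b\cdot y)$, $[y\cdot a,x]=[y,a\cdot x]$, $(x_1,y)\cdot x_2=x_1\cdot[y,x_2]$, $[y_1,x]\cdot y_2=y_1\cdot(x,y_2)$, with the induced maps $X\otimes Y\to A$, $Y\otimes X\to B$ surjective; $(X,Y)$ is then a Morita pair. *)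

theory Defs
  imports Main
begin

(* Existentially quantified structures
   (the m-semilattices A, B) are given explicitly by a carrier C, a join j,
   a zero z and (for m-semilattices) a multiplication m. *)

definition jsl :: "'a set \<Rightarrow> ('a \<Rightarrow> 'a \<Rightarrow> 'a) \<Rightarrow> 'a \<Rightarrow> bool" where
  "jsl C j z \<longleftrightarrow> z \<in> C \<and> (\<forall>a\<in>C. \<forall>b\<in>C. j a b \<in> C) \<and>
     (\<forall>a\<in>C. \<forall>b\<in>C. \<forall>c\<in>C. j (j a b) c = j a (j b c)) \<and>
     (\<forall>a\<in>C. \<forall>b\<in>C. j a b = j b a) \<and> (\<forall>a\<in>C. j a a = a) \<and> (\<forall>a\<in>C. j z a = a)"

definition msl :: "'a set \<Rightarrow> ('a \<Rightarrow> 'a \<Rightarrow> 'a) \<Rightarrow> 'a \<Rightarrow> ('a \<Rightarrow> 'a \<Rightarrow> 'a) \<Rightarrow> bool" where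
  "msl C j z m \<longleftrightarrow> jsl C j z \<and> (\<forall>a\<in>C. \<forall>b\<in>C. m a b \<in> C) \<and>
     (\<forall>a\<in>C. \<forall>b\<in>C. \<forall>c\<in>C. m (m a b) c = m a (m b c)) \<and>
     (\<forall>a\<in>C. \<forall>b\<in>C. \<forall>c\<in>C. m a (j b c) = j (m a b) (m a c)) \<and>
     (\<forall>a\<in>C. \<forall>b\<in>C. \<forall>c\<in>C. m (j b c) a = j (m b a) (m c a)) \<and>
     (\<forall>a\<in>C. m a z = z \<and> m z a = z)"

text \<open>m-regular m-semilattice: m-regular as a bimodule over itself.\<close>
definition msl_regular :: "'a set \<Rightarrow> ('a \<Rightarrow> 'a \<Rightarrow> 'a) \<Rightarrow> 'a \<Rightarrow> ('a \<Rightarrow> 'a \<Rightarrow> 'a) \<Rightarrow> bool" where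
  "msl_regular C j z m \<longleftrightarrow> msl C j z m \<and>
     (\<forall>a\<in>C. \<exists>ps. set ps \<subseteq> C \<times> C \<and> a = foldr (\<lambda>(b, c) acc. j (m b c) acc) ps z) \<and>
     (\<forall>a\<in>C. \<forall>b\<in>C. (\<forall>c\<in>C. m a c = m b c) \<longrightarrow> a = b) \<and>
     (\<forall>a\<in>C. \<forall>b\<in>C. (\<forall>c\<in>C. m c a = m c b) \<longrightarrow> a = b)"

definition rmod :: "'a set \<Rightarrow> ('a \<Rightarrow> 'a \<Rightarrow> 'a) \<Rightarrow> 'a \<Rightarrow> ('a \<Rightarrow> 'a \<Rightarrow> 'a)
    \<Rightarrow> ('x::bounded_semilattice_sup_bot \<Rightarrow> 'a \<Rightarrow> 'x) \<Rightarrow> bool" where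
  "rmod C j z m act \<longleftrightarrow>
     (\<forall>x. \<forall>a\<in>C. \<forall>b\<in>C. act x (m a b) = act (act x a) b) \<and>
     (\<forall>x y. \<forall>a\<in>C. act (sup x y) a = sup (act x a) (act y a)) \<and>
     (\<forall>a\<in>C. act bot a = bot) \<and>
     (\<forall>x. \<forall>a\<in>C. \<forall>b\<in>C. act x (j a b) = sup (act x a) (act x b)) \<and>
     (\<forall>x. act x z = bot)"

definition lmod :: "'a set \<Rightarrow> ('a \<Rightarrow> 'a \<Rightarrow> 'a) \<Rightarrow> 'a \<Rightarrow> ('a \<Rightarrow> 'a \<Rightarrow> 'a)
    \<Rightarrow> ('a \<Rightarrow> 'x::bounded_semilattice_sup_bot \<Rightarrow> 'x) \<Rightarrow> bool" where
  "lmod C j z m act \<longleftrightarrow>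
     (\<forall>x. \<forall>a\<in>C. \<forall>b\<in>C. act (m a b) x = act a (act b x)) \<and>
     (\<forall>x y. \<forall>a\<in>C. act a (sup x y) = sup (act a x) (act a y)) \<and>
     (\<forall>a\<in>C. act a bot = bot) \<and>
     (\<forall>x. \<forall>a\<in>C. \<forall>b\<in>C. act (j a b) x = sup (act a x) (act b x)) \<and>
     (\<forall>x. act z x = bot)"

definition rmod_regular :: "'a set \<Rightarrow> ('a \<Rightarrow> 'a \<Rightarrow> 'a) \<Rightarrow> 'a \<Rightarrow> ('a \<Rightarrow> 'a \<Rightarrow> 'a)
    \<Rightarrow> ('x::bounded_semilattice_sup_bot \<Rightarrow> 'a \<Rightarrow> 'x) \<Rightarrow> bool" where
  "rmod_regular C j z m act \<longleftrightarrow> rmod C j z m act \<and>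
     (\<forall>x. \<exists>ps. snd ` set ps \<subseteq> C \<and> x = foldr (\<lambda>(y, a) acc. sup (act y a) acc) ps bot) \<and>
     (\<forall>x y. (\<forall>a\<in>C. act x a = act y a) \<longrightarrow> x = y)"

definition lmod_regular :: "'a set \<Rightarrow> ('a \<Rightarrow> 'a \<Rightarrow> 'a) \<Rightarrow> 'a \<Rightarrow> ('a \<Rightarrow> 'a \<Rightarrow> 'a)
    \<Rightarrow> ('a \<Rightarrow> 'x::bounded_semilattice_sup_bot \<Rightarrow> 'x) \<Rightarrow> bool" where
  "lmod_regular C j z m act \<longleftrightarrow> lmod C j z m act \<and>
     (\<forall>x. \<exists>ps. fst ` set ps \<subseteq> C \<and> x = foldr (\<lambda>(a, y) acc. sup (act a y) acc) ps bot) \<and>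
     (\<forall>x y. (\<forall>a\<in>C. act a x = act a y) \<longrightarrow> x = y)"

(* ---------- Tensor products of join semilattices ------------------------------
   Free join semilattice on a set T of generators = finite subsets of T (join = union,
   0 = {}); the tensor product is its quotient by the congruence generated by the
   multilinearity relations R. *)

inductive fcong :: "('t set \<Rightarrow> 't set \<Rightarrow> bool) \<Rightarrow> 't set \<Rightarrow> 't set \<Rightarrow> bool" for R where
  base: "R S T \<Longrightarrow> fcong R S T"
| refl: "finite S \<Longrightarrow> fcong R S S"
| sym: "fcong R S T \<Longrightarrow> fcong R T S"
| trans: "fcong R S T \<Longrightarrow> fcong R T U \<Longrightarrow> fcong R S U"
| union: "fcong R S S' \<Longrightarrow> fcong R T T' \<Longrightarrow> fcong R (S \<union> T) (S' \<union> T')"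

definition tclass :: "('t set \<Rightarrow> 't set \<Rightarrow> bool) \<Rightarrow> 't set \<Rightarrow> 't set set" where
  "tclass R S = {T. fcong R S T}"

definition tcarrier :: "('t set \<Rightarrow> 't set \<Rightarrow> bool) \<Rightarrow> 't set set set" where
  "tcarrier R = {tclass R S | S. finite S}"

definition tjoin :: "('t set \<Rightarrow> 't set \<Rightarrow> bool) \<Rightarrow> 't set set \<Rightarrow> 't set set \<Rightarrow> 't set set" where
  "tjoin R P Q = tclass R ((SOME S. S \<in> P) \<union> (SOME T. T \<in> Q))"

definition tzero :: "('t set \<Rightarrow> 't set \<Rightarrow> bool) \<Rightarrow> 't set set" where
  "tzero R = tclass R {}"

definition tgen :: "('t set \<Rightarrow> 't set \<Rightarrow> bool) \<Rightarrow> 't \<Rightarrow> 't set set" where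
  "tgen R t = tclass R {t}"

definition gen2 :: "('x::bounded_semilattice_sup_bot \<times> 'y::bounded_semilattice_sup_bot) set
    \<Rightarrow> ('x \<times> 'y) set \<Rightarrow> bool" where
  "gen2 S T \<longleftrightarrow>
     (\<exists>x x' y. S = {(sup x x', y)} \<and> T = {(x, y), (x', y)}) \<or>
     (\<exists>x y y'. S = {(x, sup y y')} \<and> T = {(x, y), (x, y')}) \<or>
     (\<exists>y. S = {(bot, y)} \<and> T = {}) \<or>
     (\<exists>x. S = {(x, bot)} \<and> T = {})"

definition gen3 :: "('x::bounded_semilattice_sup_bot \<times> 'y::bounded_semilattice_sup_bot
      \<times> 'z::bounded_semilattice_sup_bot) set \<Rightarrow> ('x \<times> 'y \<times> 'z) set \<Rightarrow> bool" where
  "gen3 S T \<longleftrightarrow>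
     (\<exists>x x' y w. S = {(sup x x', y, w)} \<and> T = {(x, y, w), (x', y, w)}) \<or>
     (\<exists>x y y' w. S = {(x, sup y y', w)} \<and> T = {(x, y, w), (x, y', w)}) \<or>
     (\<exists>x y w w'. S = {(x, y, sup w w')} \<and> T = {(x, y, w), (x, y, w')}) \<or>
     (\<exists>y w. S = {(bot, y, w)} \<and> T = {}) \<or>
     (\<exists>x w. S = {(x, bot, w)} \<and> T = {}) \<or>
     (\<exists>x y. S = {(x, y, bot)} \<and> T = {})"

abbreviation tens2 :: "'x::bounded_semilattice_sup_bot \<Rightarrow> 'y::bounded_semilattice_sup_bot
    \<Rightarrow> ('x \<times> 'y) set set" where
  "tens2 x y \<equiv> tgen gen2 (x, y)"

abbreviation tens3 :: "'x::bounded_semilattice_sup_bot \<Rightarrow> 'y::bounded_semilattice_sup_bot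
    \<Rightarrow> 'z::bounded_semilattice_sup_bot \<Rightarrow> ('x \<times> 'y \<times> 'z) set set" where
  "tens3 x y w \<equiv> tgen gen3 (x, y, w)"

definition thom_cls :: "('t set \<Rightarrow> 't set \<Rightarrow> bool) \<Rightarrow> ('t set set \<Rightarrow> 'x::bounded_semilattice_sup_bot) \<Rightarrow> bool" where
  "thom_cls R f \<longleftrightarrow> f (tzero R) = bot \<and>
     (\<forall>P\<in>tcarrier R. \<forall>Q\<in>tcarrier R. f (tjoin R P Q) = sup (f P) (f Q))"

definition thom :: "('t set \<Rightarrow> 't set \<Rightarrow> bool) \<Rightarrow> 'a set \<Rightarrow> ('a \<Rightarrow> 'a \<Rightarrow> 'a) \<Rightarrow> 'a
    \<Rightarrow> ('t set set \<Rightarrow> 'a) \<Rightarrow> bool" where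
  "thom R C j z f \<longleftrightarrow> f ` tcarrier R \<subseteq> C \<and> f (tzero R) = z \<and>
     (\<forall>P\<in>tcarrier R. \<forall>Q\<in>tcarrier R. f (tjoin R P Q) = j (f P) (f Q))"

definition morita_context ::
  "'a set \<Rightarrow> ('a \<Rightarrow> 'a \<Rightarrow> 'a) \<Rightarrow> 'a \<Rightarrow> ('a \<Rightarrow> 'a \<Rightarrow> 'a) \<Rightarrow>
   'b set \<Rightarrow> ('b \<Rightarrow> 'b \<Rightarrow> 'b) \<Rightarrow> 'b \<Rightarrow> ('b \<Rightarrow> 'b \<Rightarrow> 'b) \<Rightarrow>
   ('a \<Rightarrow> 'x::bounded_semilattice_sup_bot \<Rightarrow> 'x) \<Rightarrow> ('x \<Rightarrow> 'b \<Rightarrow> 'x) \<Rightarrow>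
   ('b \<Rightarrow> 'y::bounded_semilattice_sup_bot \<Rightarrow> 'y) \<Rightarrow> ('y \<Rightarrow> 'a \<Rightarrow> 'y) \<Rightarrow>
   ('x \<Rightarrow> 'y \<Rightarrow> 'a) \<Rightarrow> ('y \<Rightarrow> 'x \<Rightarrow> 'b) \<Rightarrow> bool" where
  "morita_context CA jA zA mA CB jB zB mB lX rX lY rY pr br \<longleftrightarrow>
     msl_regular CA jA zA mA \<and> msl_regular CB jB zB mB \<and>
     \<comment> \<open>X is an m-regular A,B-bimodule\<close>
     lmod_regular CA jA zA mA lX \<and> rmod_regular CB jB zB mB rX \<and>
     (\<forall>a\<in>CA. \<forall>b\<in>CB. \<forall>x. rX (lX a x) b = lX a (rX x b)) \<and>
     \<comment> \<open>Y is an m-regular B,A-bimodule\<close>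
     lmod_regular CB jB zB mB lY \<and> rmod_regular CA jA zA mA rY \<and>
     (\<forall>b\<in>CB. \<forall>a\<in>CA. \<forall>y. rY (lY b y) a = lY b (rY y a)) \<and>
     \<comment> \<open>(-,-) : X \<times> Y \<rightarrow> A is an A,A-bimodule map preserving finite joins in each variable\<close>
     (\<forall>x y. pr x y \<in> CA) \<and>
     (\<forall>x x' y. pr (sup x x') y = jA (pr x y) (pr x' y)) \<and> (\<forall>y. pr bot y = zA) \<and>
     (\<forall>x y y'. pr x (sup y y') = jA (pr x y) (pr x y')) \<and> (\<forall>x. pr x bot = zA) \<and>
     (\<forall>a\<in>CA. \<forall>x y. pr (lX a x) y = mA a (pr x y)) \<and>
     (\<forall>a\<in>CA. \<forall>x y. pr x (rY y a) = mA (pr x y) a) \<and>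
     \<comment> \<open>[-,-] : Y \<times> X \<rightarrow> B is a B,B-bimodule map preserving finite joins in each variable\<close>
     (\<forall>y x. br y x \<in> CB) \<and>
     (\<forall>y y' x. br (sup y y') x = jB (br y x) (br y' x)) \<and> (\<forall>x. br bot x = zB) \<and>
     (\<forall>y x x'. br y (sup x x') = jB (br y x) (br y x')) \<and> (\<forall>y. br y bot = zB) \<and>
     (\<forall>b\<in>CB. \<forall>y x. br (lY b y) x = mB b (br y x)) \<and>
     (\<forall>b\<in>CB. \<forall>y x. br y (rX x b) = mB (br y x) b) \<and>
     \<comment> \<open>Morita identities\<close>
     (\<forall>x y. \<forall>b\<in>CB. pr (rX x b) y = pr x (lY b y)) \<and>
     (\<forall>y x. \<forall>a\<in>CA. br (rY y a) x = br y (lX a x)) \<and>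
     (\<forall>x1 y x2. lX (pr x1 y) x2 = rX x1 (br y x2)) \<and>
     (\<forall>y1 x y2. lY (br y1 x) y2 = rY y1 (pr x y2)) \<and>
     \<comment> \<open>the induced maps X \<otimes> Y \<rightarrow> A and Y \<otimes> X \<rightarrow> B are surjective\<close>
     (\<exists>h. thom gen2 CA jA zA h \<and> (\<forall>x y. h (tens2 x y) = pr x y) \<and> h ` tcarrier gen2 = CA) \<and>
     (\<exists>h. thom gen2 CB jB zB h \<and> (\<forall>y x. h (tens2 y x) = br y x) \<and> h ` tcarrier gen2 = CB)"

text \<open>(X,Y) is a Morita pair between some m-regular m-semilattices A, B whose carriers
  live in the types 'a and 'b.\<close>
definition morita_pair :: "'a itself \<Rightarrow> 'b itself \<Rightarrow> 'x::bounded_semilattice_sup_bot itself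
    \<Rightarrow> 'y::bounded_semilattice_sup_bot itself \<Rightarrow> bool" where
  "morita_pair _ _ _ _ \<longleftrightarrow>
     (\<exists>(CA::'a set) jA zA mA (CB::'b set) jB zB mB
        (lX::'a \<Rightarrow> 'x \<Rightarrow> 'x) rX (lY::'b \<Rightarrow> 'y \<Rightarrow> 'y) rY pr br.
        morita_context CA jA zA mA CB jB zB mB lX rX lY rY pr br)"

end

theory Submission
  imports Defs
begin

text \<open>
  Given a Morita context, put \<open>p (x \<otimes> y \<otimes> x') = (x, y) \<cdot> x'\<close> and
  \<open>q (y \<otimes> x \<otimes> y') = [y, x] \<cdot> y'\<close>: conditions 1 and 2 are the Morita identities, surjectivity
  comes from essentiality of \<open>X\<close>, \<open>Y\<close> and surjectivity of the pairings, and the cancellation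
  laws from separation of \<open>X\<close>, \<open>Y\<close> over \<open>A\<close> and \<open>B\<close>.

  Conversely, every \<open>P \<in> X \<otimes> Y\<close> induces \<open>w \<mapsto> p (P \<otimes> w)\<close> on \<open>X\<close>; these maps, with pointwise
  join and composition, form \<open>A\<close>, which acts on \<open>Y\<close> from the right through \<open>v \<mapsto> q (v \<otimes> P)\<close>.
  Cancellation in \<open>q\<close> shows that this right action depends only on the map induced by \<open>P\<close>, and
  makes both actions separated; surjectivity of \<open>p\<close>, \<open>q\<close> makes them essential. The
  m-semilattice \<open>B\<close> is built in the same way with \<open>X\<close> and \<open>Y\<close> exchanged.
\<close>

global_interpretation finite_sup: semilattice_neutr_set "sup :: 'a::bounded_semilattice_sup_bot \<Rightarrow> 'a \<Rightarrow> 'a" bot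
  by (simp add: semilattice_neutr_set_def sup_bot.semilattice_neutr_axioms)

definition finite_rel :: "('t set \<Rightarrow> 't set \<Rightarrow> bool) \<Rightarrow> bool" where
  "finite_rel R \<longleftrightarrow> (\<forall>S T. R S T \<longrightarrow> finite S \<and> finite T)"

definition respects_rel :: "('t set \<Rightarrow> 't set \<Rightarrow> bool) \<Rightarrow> ('t \<Rightarrow> 'v::bounded_semilattice_sup_bot) \<Rightarrow> bool" where
  "respects_rel R g \<longleftrightarrow> (\<forall>S T. R S T \<longrightarrow> finite_sup.F (g ` S) = finite_sup.F (g ` T))"

text \<open>Evaluated on an arbitrary representative of the class; independent of that choice when
  \<open>g\<close> respects \<open>R\<close> (see \<open>tlift_tclass\<close>).\<close>
definition tlift :: "('t set \<Rightarrow> 't set \<Rightarrow> bool) \<Rightarrow> ('t \<Rightarrow> 'v::bounded_semilattice_sup_bot) \<Rightarrow> 't set set \<Rightarrow> 'v" where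
  "tlift R g P = finite_sup.F (g ` (SOME S. S \<in> P))"

lemma finite_rel_gen2: "finite_rel gen2"
  unfolding finite_rel_def gen2_def by auto

lemma finite_rel_gen3: "finite_rel gen3"
  unfolding finite_rel_def gen3_def by auto

lemma fcong_finite: "fcong R S T \<Longrightarrow> finite_rel R \<Longrightarrow> finite S \<and> finite T"
  by (induct rule: fcong.induct) (auto simp: finite_rel_def)

lemma tclass_eq_if_fcong: "fcong R S T \<Longrightarrow> tclass R S = tclass R T"
  unfolding tclass_def by (auto intro: fcong.trans fcong.sym)

lemma fcong_some_tclass: "finite S \<Longrightarrow> fcong R S (SOME T. T \<in> tclass R S)"
  using someI[of "\<lambda>T. T \<in> tclass R S" S] fcong.refl unfolding tclass_def by auto

lemma tjoin_tclass: "finite S \<Longrightarrow> finite T \<Longrightarrow> tjoin R (tclass R S) (tclass R T) = tclass R (S \<union> T)"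
  unfolding tjoin_def by (metis tclass_eq_if_fcong fcong.union fcong_some_tclass)

lemma tclass_insert: "finite S \<Longrightarrow> tclass R (insert t S) = tjoin R (tgen R t) (tclass R S)"
  by (simp add: tgen_def tjoin_tclass)

lemma tzero_in_tcarrier: "tzero R \<in> tcarrier R"
  unfolding tzero_def tcarrier_def by auto

lemma tgen_in_tcarrier: "tgen R t \<in> tcarrier R"
  unfolding tgen_def tcarrier_def by auto

lemma tjoin_in_tcarrier: "P \<in> tcarrier R \<Longrightarrow> Q \<in> tcarrier R \<Longrightarrow> tjoin R P Q \<in> tcarrier R"
  unfolding tcarrier_def by (auto simp: tjoin_tclass)

lemma tcarrier_induct[consumes 1, case_names zero gen join]:
  assumes "P \<in> tcarrier R"
    and "\<Phi> (tzero R)" and "\<And>t. \<Phi> (tgen R t)"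
    and "\<And>P Q. P \<in> tcarrier R \<Longrightarrow> Q \<in> tcarrier R \<Longrightarrow> \<Phi> P \<Longrightarrow> \<Phi> Q \<Longrightarrow> \<Phi> (tjoin R P Q)"
  shows "\<Phi> P"
proof -
  obtain S where "finite S" "P = tclass R S"
    using assms(1) unfolding tcarrier_def by auto
  moreover have "\<Phi> (tclass R S) \<and> tclass R S \<in> tcarrier R" if "finite S" for S
    using that
  proof (induct S rule: finite_induct)
    case empty
    then show ?case using assms(2) tzero_in_tcarrier by (simp add: tzero_def)
  next
    case (insert t S)
    then show ?case
      by (auto simp: tclass_insert intro: assms(3,4) tgen_in_tcarrier tjoin_in_tcarrier)
  qed
  ultimately show ?thesis by simp
qed

lemma tcarrier_gen2_induct[consumes 1, case_names zero gen join]: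
  assumes "P \<in> tcarrier gen2" "\<Phi> (tzero gen2)" "\<And>x y. \<Phi> (tens2 x y)"
    "\<And>P Q. P \<in> tcarrier gen2 \<Longrightarrow> Q \<in> tcarrier gen2 \<Longrightarrow> \<Phi> P \<Longrightarrow> \<Phi> Q \<Longrightarrow> \<Phi> (tjoin gen2 P Q)"
  shows "\<Phi> P"
  using assms(1)
proof (induct rule: tcarrier_induct)
  case (gen t)
  then show ?case using assms(3) by (cases t) auto
qed (use assms in auto)

lemma finite_sup_eq_if_fcong:
  assumes "finite_rel R" "respects_rel R g" "fcong R S T"
  shows "finite_sup.F (g ` S) = finite_sup.F (g ` T)"
  using assms(3)
proof (induct rule: fcong.induct)
  case (union S S' T T')
  then show ?case using fcong_finite[OF _ assms(1)] by (simp add: image_Un finite_sup.union)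
qed (use assms in \<open>auto simp: respects_rel_def\<close>)

lemma tlift_tclass:
  assumes "finite_rel R" "respects_rel R g" "finite S"
  shows "tlift R g (tclass R S) = finite_sup.F (g ` S)"
  unfolding tlift_def
  by (rule finite_sup_eq_if_fcong[OF assms(1,2) fcong_some_tclass[OF assms(3)], symmetric])

lemma tlift_tgen: "finite_rel R \<Longrightarrow> respects_rel R g \<Longrightarrow> tlift R g (tgen R t) = g t"
  unfolding tgen_def by (simp add: tlift_tclass)

lemma thom_cls_tlift: "finite_rel R \<Longrightarrow> respects_rel R g \<Longrightarrow> thom_cls R (tlift R g)"
  unfolding thom_cls_def tcarrier_def tzero_def
  by (auto simp: tjoin_tclass tlift_tclass image_Un finite_sup.union)

lemma thom_cls_tclass:
  assumes "thom_cls R f" "finite S"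
  shows "f (tclass R S) = finite_sup.F ((\<lambda>t. f (tgen R t)) ` S)"
  using assms(2)
proof (induct S rule: finite_induct)
  case empty
  then show ?case using assms(1) by (simp add: thom_cls_def tzero_def)
next
  case (insert t S)
  moreover have "tclass R S \<in> tcarrier R" using insert(1) unfolding tcarrier_def by auto
  ultimately show ?case
    using assms(1) by (simp add: tclass_insert thom_cls_def tgen_in_tcarrier)
qed

lemma thom_cls_respects_rel:
  assumes "thom_cls R f" "finite_rel R"
  shows "respects_rel R (\<lambda>t. f (tgen R t))"
  unfolding respects_rel_def
proof (intro allI impI)
  fix S T
  assume "R S T"
  then have "tclass R S = tclass R T" by (intro tclass_eq_if_fcong fcong.base)
  moreover have "finite S" "finite T" using assms(2) \<open>R S T\<close> by (auto simp: finite_rel_def)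
  ultimately show "finite_sup.F ((\<lambda>t. f (tgen R t)) ` S) = finite_sup.F ((\<lambda>t. f (tgen R t)) ` T)"
    using thom_cls_tclass[OF assms(1)] by metis
qed

lemma thom_cls_gen3_trilinear:
  assumes "thom_cls gen3 f"
  shows "f (tens3 (sup x x') y w) = sup (f (tens3 x y w)) (f (tens3 x' y w))"
    and "f (tens3 x (sup y y') w) = sup (f (tens3 x y w)) (f (tens3 x y' w))"
    and "f (tens3 x y (sup w w')) = sup (f (tens3 x y w)) (f (tens3 x y w'))"
    and "f (tens3 bot y w) = bot"
    and "f (tens3 x bot w) = bot"
    and "f (tens3 x y bot) = bot"
proof -
  have "gen3 {(sup x x', y, w)} {(x, y, w), (x', y, w)}" "gen3 {(x, sup y y', w)} {(x, y, w), (x, y', w)}"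
    "gen3 {(x, y, sup w w')} {(x, y, w), (x, y, w')}" "gen3 {(bot, y, w)} {}" "gen3 {(x, bot, w)} {}"
    "gen3 {(x, y, bot)} {}"
    unfolding gen3_def by blast+
  note rel = this[THEN thom_cls_respects_rel[OF assms finite_rel_gen3, unfolded respects_rel_def, rule_format]]
  show "f (tens3 (sup x x') y w) = sup (f (tens3 x y w)) (f (tens3 x' y w))"
    and "f (tens3 x (sup y y') w) = sup (f (tens3 x y w)) (f (tens3 x y' w))"
    and "f (tens3 x y (sup w w')) = sup (f (tens3 x y w)) (f (tens3 x y w'))"
    and "f (tens3 bot y w) = bot"
    and "f (tens3 x bot w) = bot"
    and "f (tens3 x y bot) = bot"
    using rel by simp_all
qed

lemma respects_gen2_if_bilinear:
  fixes g :: "'x::bounded_semilattice_sup_bot \<times> 'y::bounded_semilattice_sup_bot \<Rightarrow> 'v::bounded_semilattice_sup_bot"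
  assumes "\<And>x x' y. g (sup x x', y) = sup (g (x, y)) (g (x', y))"
    "\<And>x y y'. g (x, sup y y') = sup (g (x, y)) (g (x, y'))"
    "\<And>y. g (bot, y) = bot" "\<And>x. g (x, bot) = bot"
  shows "respects_rel gen2 g"
  unfolding respects_rel_def gen2_def using assms by auto

lemma respects_gen3_if_trilinear:
  fixes g :: "'x::bounded_semilattice_sup_bot \<times> 'y::bounded_semilattice_sup_bot \<times> 'z::bounded_semilattice_sup_bot
    \<Rightarrow> 'v::bounded_semilattice_sup_bot"
  assumes "\<And>x x' y w. g (sup x x', y, w) = sup (g (x, y, w)) (g (x', y, w))"
    "\<And>x y y' w. g (x, sup y y', w) = sup (g (x, y, w)) (g (x, y', w))"
    "\<And>x y w w'. g (x, y, sup w w') = sup (g (x, y, w)) (g (x, y, w'))"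
    "\<And>y w. g (bot, y, w) = bot" "\<And>x w. g (x, bot, w) = bot" "\<And>x y. g (x, y, bot) = bot"
  shows "respects_rel gen3 g"
  unfolding respects_rel_def gen3_def using assms by auto

lemma sup_foldr_sup:
  "sup (foldr (\<lambda>(a, y) acc. sup (G a y) acc) ps bot) z =
    foldr (\<lambda>(a, y) acc. sup (G a y) acc) ps (z::'v::bounded_semilattice_sup_bot)"
  by (induct ps) (auto simp: sup_assoc)

lemma thom_cls_iff_thom: "thom_cls R f \<longleftrightarrow> thom R UNIV sup bot f"
  unfolding thom_cls_def thom_def by simp

lemma thom_image_induct[consumes 2, case_names zero gen join]:
  assumes "thom R C j z h" "a \<in> h ` tcarrier R"
    and "\<Phi> z" "\<And>t. \<Phi> (h (tgen R t))"
    and "\<And>a b. a \<in> C \<Longrightarrow> b \<in> C \<Longrightarrow> \<Phi> a \<Longrightarrow> \<Phi> b \<Longrightarrow> \<Phi> (j a b)"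
  shows "\<Phi> a"
proof -
  obtain P where "P \<in> tcarrier R" "a = h P" using assms(2) by blast
  moreover have "\<Phi> (h P)" if "P \<in> tcarrier R" for P
    using that
  proof (induct rule: tcarrier_induct)
    case zero
    then show ?case using assms(1,3) by (simp add: thom_def)
  next
    case (gen t)
    then show ?case by (rule assms(4))
  next
    case (join P Q)
    then show ?case using assms(1,5) by (auto simp: thom_def)
  qed
  ultimately show ?thesis by simp
qed

lemma thom_image_closed:
  assumes "thom R C j z h"
  shows "z \<in> h ` tcarrier R"
    and "h (tgen R t) \<in> h ` tcarrier R"
    and "a \<in> h ` tcarrier R \<Longrightarrow> b \<in> h ` tcarrier R \<Longrightarrow> j a b \<in> h ` tcarrier R"
proof -
  show "z \<in> h ` tcarrier R"
    using assms tzero_in_tcarrier unfolding thom_def by (metis image_eqI)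
  show "h (tgen R t) \<in> h ` tcarrier R"
    using tgen_in_tcarrier by (rule imageI)
  assume "a \<in> h ` tcarrier R" "b \<in> h ` tcarrier R"
  then obtain P Q where "P \<in> tcarrier R" "Q \<in> tcarrier R" "a = h P" "b = h Q" by blast
  then show "j a b \<in> h ` tcarrier R"
    using assms tjoin_in_tcarrier unfolding thom_def by (metis image_eqI)
qed

lemma lmod_regularD:
  assumes "lmod_regular C j z m act"
  shows "a \<in> C \<Longrightarrow> b \<in> C \<Longrightarrow> act (m a b) x = act a (act b x)"
    and "a \<in> C \<Longrightarrow> act a (sup x y) = sup (act a x) (act a y)"
    and "a \<in> C \<Longrightarrow> act a bot = bot"
    and "a \<in> C \<Longrightarrow> b \<in> C \<Longrightarrow> act (j a b) x = sup (act a x) (act b x)"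
    and "act z x = bot"
    and "\<exists>ps. fst ` set ps \<subseteq> C \<and> x = foldr (\<lambda>(a, y) acc. sup (act a y) acc) ps bot"
    and "(\<And>a. a \<in> C \<Longrightarrow> act a x = act a y) \<Longrightarrow> x = y"
proof -
  have laws: "lmod C j z m act"
    and essential: "\<forall>x. \<exists>ps. fst ` set ps \<subseteq> C \<and> x = foldr (\<lambda>(a, y) acc. sup (act a y) acc) ps bot"
    and separating: "\<forall>x y. (\<forall>a\<in>C. act a x = act a y) \<longrightarrow> x = y"
    using assms unfolding lmod_regular_def by simp_all
  from laws show "a \<in> C \<Longrightarrow> b \<in> C \<Longrightarrow> act (m a b) x = act a (act b x)"
    and "a \<in> C \<Longrightarrow> act a (sup x y) = sup (act a x) (act a y)"
    and "a \<in> C \<Longrightarrow> act a bot = bot"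
    and "a \<in> C \<Longrightarrow> b \<in> C \<Longrightarrow> act (j a b) x = sup (act a x) (act b x)"
    and "act z x = bot"
    unfolding lmod_def by simp_all
  from essential show "\<exists>ps. fst ` set ps \<subseteq> C \<and> x = foldr (\<lambda>(a, y) acc. sup (act a y) acc) ps bot"
    by blast
  from separating show "(\<And>a. a \<in> C \<Longrightarrow> act a x = act a y) \<Longrightarrow> x = y"
    by blast
qed

lemma rmod_regularD:
  assumes "rmod_regular C j z m act"
  shows "a \<in> C \<Longrightarrow> b \<in> C \<Longrightarrow> act x (j a b) = sup (act x a) (act x b)"
    and "act x z = bot"
    and "(\<And>a. a \<in> C \<Longrightarrow> act x a = act y a) \<Longrightarrow> x = y"
proof -
  have laws: "rmod C j z m act" and separating: "\<forall>x y. (\<forall>a\<in>C. act x a = act y a) \<longrightarrow> x = y"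
    using assms unfolding rmod_regular_def by simp_all
  from laws show "a \<in> C \<Longrightarrow> b \<in> C \<Longrightarrow> act x (j a b) = sup (act x a) (act x b)" and "act x z = bot"
    unfolding rmod_def by simp_all
  from separating show "(\<And>a. a \<in> C \<Longrightarrow> act x a = act y a) \<Longrightarrow> x = y"
    by blast
qed

definition triple_action ::
  "('a \<Rightarrow> 'x \<Rightarrow> 'x) \<Rightarrow> ('x::bounded_semilattice_sup_bot \<Rightarrow> 'y::bounded_semilattice_sup_bot \<Rightarrow> 'a)
    \<Rightarrow> ('x \<times> 'y \<times> 'x) set set \<Rightarrow> 'x" where
  "triple_action act pr = tlift gen3 (\<lambda>(x, y, w). act (pr x y) w)"

text \<open>The half of a Morita context that is needed to construct \<open>p\<close>; \<open>q\<close> comes from the mirror image.\<close>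
locale morita_side =
  fixes CA :: "'a set" and jA zA mA and CB :: "'b set" and jB zB mB
    and lX :: "'a \<Rightarrow> 'x::bounded_semilattice_sup_bot \<Rightarrow> 'x" and rX :: "'x \<Rightarrow> 'b \<Rightarrow> 'x"
    and lY :: "'b \<Rightarrow> 'y::bounded_semilattice_sup_bot \<Rightarrow> 'y"
    and pr :: "'x \<Rightarrow> 'y \<Rightarrow> 'a" and br :: "'y \<Rightarrow> 'x \<Rightarrow> 'b"
  assumes lX_regular: "lmod_regular CA jA zA mA lX"
    and rX_regular: "rmod_regular CB jB zB mB rX"
    and pr_closed: "pr x y \<in> CA"
    and br_closed: "br y x \<in> CB"
    and pr_sup_left: "pr (sup x x') y = jA (pr x y) (pr x' y)"
    and pr_bot_left: "pr bot y = zA"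
    and pr_sup_right: "pr x (sup y y') = jA (pr x y) (pr x y')"
    and pr_bot_right: "pr x bot = zA"
    and pr_lX: "a \<in> CA \<Longrightarrow> pr (lX a x) y = mA a (pr x y)"
    and pr_rX: "b \<in> CB \<Longrightarrow> pr (rX x b) y = pr x (lY b y)"
    and lX_pr: "lX (pr x1 y) x2 = rX x1 (br y x2)"
    and pr_onto: "\<exists>h. thom gen2 CA jA zA h \<and> (\<forall>x y. h (tens2 x y) = pr x y) \<and> h ` tcarrier gen2 = CA"
    and br_onto: "\<exists>h. thom gen2 CB jB zB h \<and> (\<forall>y x. h (tens2 y x) = br y x) \<and> h ` tcarrier gen2 = CB"
begin

lemmas lX_mult = lmod_regularD(1)[OF lX_regular]
  and lX_sup = lmod_regularD(2)[OF lX_regular]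
  and lX_bot = lmod_regularD(3)[OF lX_regular]
  and lX_join = lmod_regularD(4)[OF lX_regular]
  and lX_zero = lmod_regularD(5)[OF lX_regular]
  and lX_essential = lmod_regularD(6)[OF lX_regular]
  and lX_separating = lmod_regularD(7)[OF lX_regular]
  and rX_join = rmod_regularD(1)[OF rX_regular]
  and rX_zero = rmod_regularD(2)[OF rX_regular]
  and rX_separating = rmod_regularD(3)[OF rX_regular]

lemma CA_induct[consumes 1, case_names zero pr join]:
  assumes "a \<in> CA" "\<Phi> zA" "\<And>x y. \<Phi> (pr x y)"
    "\<And>a b. a \<in> CA \<Longrightarrow> b \<in> CA \<Longrightarrow> \<Phi> a \<Longrightarrow> \<Phi> b \<Longrightarrow> \<Phi> (jA a b)"
  shows "\<Phi> a"
proof -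
  obtain h where h: "thom gen2 CA jA zA h" "\<And>x y. h (tens2 x y) = pr x y" "h ` tcarrier gen2 = CA"
    using pr_onto by blast
  from h(1) have "a \<in> h ` tcarrier gen2" using assms(1) h(3) by simp
  with h(1) show ?thesis
  proof (induct rule: thom_image_induct)
    case (gen t)
    then show ?case using h(2) assms(3) by (cases t) simp
  qed (use assms in auto)
qed

lemma CB_induct[consumes 1, case_names zero br join]:
  assumes "b \<in> CB" "\<Phi> zB" "\<And>y x. \<Phi> (br y x)"
    "\<And>a b. a \<in> CB \<Longrightarrow> b \<in> CB \<Longrightarrow> \<Phi> a \<Longrightarrow> \<Phi> b \<Longrightarrow> \<Phi> (jB a b)"
  shows "\<Phi> b"
proof -
  obtain h where h: "thom gen2 CB jB zB h" "\<And>y x. h (tens2 y x) = br y x" "h ` tcarrier gen2 = CB"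
    using br_onto by blast
  from h(1) have "b \<in> h ` tcarrier gen2" using assms(1) h(3) by simp
  with h(1) show ?thesis
  proof (induct rule: thom_image_induct)
    case (gen t)
    then show ?case using h(2) assms(3) by (cases t) simp
  qed (use assms in auto)
qed

lemma respects_gen3_lX_pr: "respects_rel gen3 (\<lambda>(x, y, w). lX (pr x y) w)"
  by (rule respects_gen3_if_trilinear)
    (simp_all add: pr_sup_left pr_sup_right pr_bot_left pr_bot_right pr_closed lX_join lX_zero lX_sup lX_bot)

lemma triple_action_tens3[simp]: "triple_action lX pr (tens3 x y w) = lX (pr x y) w"
  unfolding triple_action_def by (simp add: tlift_tgen[OF finite_rel_gen3 respects_gen3_lX_pr])

lemma thom_cls_triple_action: "thom_cls gen3 (triple_action lX pr)"
  unfolding triple_action_def by (rule thom_cls_tlift[OF finite_rel_gen3 respects_gen3_lX_pr])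

text \<open>Surjectivity: \<open>X\<close> is essential and \<open>(-,-)\<close> is onto \<open>A\<close>.\<close>
lemma triple_action_surj: "triple_action lX pr ` tcarrier gen3 = UNIV"
proof -
  let ?im = "triple_action lX pr ` tcarrier gen3"
  note closed = thom_image_closed[OF thom_cls_triple_action[unfolded thom_cls_iff_thom]]
  have lX_in: "lX a y \<in> ?im" if "a \<in> CA" for a y
    using that
  proof (induct a rule: CA_induct)
    case zero
    then show ?case using closed(1) by (simp add: lX_zero)
  next
    case (pr x' y')
    then show ?case using closed(2)[of "(x', y', y)"] by simp
  next
    case (join a b)
    then show ?case using closed(3) by (simp add: lX_join)
  qed
  have foldr_in: "foldr (\<lambda>(a, y) acc. sup (lX a y) acc) ps bot \<in> ?im" if "fst ` set ps \<subseteq> CA" for ps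
    using that
  proof (induct ps)
    case Nil
    then show ?case using closed(1) by simp
  next
    case (Cons ay ps)
    then show ?case using closed(3) lX_in by (cases ay) simp
  qed
  have "x \<in> ?im" for x
  proof -
    obtain ps where "fst ` set ps \<subseteq> CA" "x = foldr (\<lambda>(a, y) acc. sup (lX a y) acc) ps bot"
      using lX_essential[of x] by (elim exE conjE) (rule that)
    then show ?thesis using foldr_in by simp
  qed
  then show ?thesis by auto
qed

lemma lX_pr_assoc:
  "lX (pr (lX (pr x1 y1) x2) y2) x3 = lX (pr x1 (lY (br y1 x2) y2)) x3"
  "lX (pr x1 (lY (br y1 x2) y2)) x3 = lX (pr x1 y1) (lX (pr x2 y2) x3)"
proof -
  show first: "lX (pr (lX (pr x1 y1) x2) y2) x3 = lX (pr x1 (lY (br y1 x2) y2)) x3"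
    by (simp only: lX_pr[of x1 y1 x2] pr_rX[OF br_closed])
  have "lX (pr x1 y1) (lX (pr x2 y2) x3) = lX (pr (lX (pr x1 y1) x2) y2) x3"
    by (simp only: pr_lX[OF pr_closed] lX_mult[OF pr_closed pr_closed])
  with first show "lX (pr x1 (lY (br y1 x2) y2)) x3 = lX (pr x1 y1) (lX (pr x2 y2) x3)"
    by simp
qed

lemma lX_pr_cancel_last:
  assumes "\<And>u v. lX (pr u v) x1 = lX (pr u v) x2"
  shows "x1 = x2"
proof (rule lX_separating)
  show "lX a x1 = lX a x2" if "a \<in> CA" for a
    using that by (induct rule: CA_induct) (simp_all add: assms lX_zero lX_join)
qed

lemma lX_pr_cancel_first:
  assumes "\<And>u v. lX (pr x1 v) u = lX (pr x2 v) u"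
  shows "x1 = x2"
proof (rule rX_separating)
  show "rX x1 b = rX x2 b" if "b \<in> CB" for b
    using that by (induct rule: CB_induct) (simp_all add: assms[unfolded lX_pr] rX_zero rX_join)
qed

end

text \<open>The six conditions of the theorem, phrased so that exchanging \<open>p\<close> with \<open>q\<close> (and \<open>X\<close> with
  \<open>Y\<close>) permutes them; hence the binder order in \<open>p_cancel_first\<close> differs from the statement.\<close>
locale morita_triple =
  fixes p :: "('x::bounded_semilattice_sup_bot \<times> 'y::bounded_semilattice_sup_bot \<times> 'x) set set \<Rightarrow> 'x"
    and q :: "('y \<times> 'x \<times> 'y) set set \<Rightarrow> 'y"
  assumes thom_p: "thom_cls gen3 p" and surj_p: "p ` tcarrier gen3 = UNIV"
    and thom_q: "thom_cls gen3 q" and surj_q: "q ` tcarrier gen3 = UNIV"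
    and p_assoc_mid: "p (tens3 (p (tens3 x1 y1 x2)) y2 x3) = p (tens3 x1 (q (tens3 y1 x2 y2)) x3)"
    and p_assoc_right: "p (tens3 x1 (q (tens3 y1 x2 y2)) x3) = p (tens3 x1 y1 (p (tens3 x2 y2 x3)))"
    and q_assoc_mid: "q (tens3 (q (tens3 y1 x1 y2)) x2 y3) = q (tens3 y1 (p (tens3 x1 y2 x2)) y3)"
    and q_assoc_right: "q (tens3 y1 (p (tens3 x1 y2 x2)) y3) = q (tens3 y1 x1 (q (tens3 y2 x2 y3)))"
    and p_cancel_last: "(\<And>u v. p (tens3 u v x1) = p (tens3 u v x2)) \<Longrightarrow> x1 = x2"
    and p_cancel_first: "(\<And>u v. p (tens3 x1 u v) = p (tens3 x2 u v)) \<Longrightarrow> x1 = x2"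
    and q_cancel_last: "(\<And>u v. q (tens3 u v y1) = q (tens3 u v y2)) \<Longrightarrow> y1 = y2"
    and q_cancel_first: "(\<And>u v. q (tens3 y1 u v) = q (tens3 y2 u v)) \<Longrightarrow> y1 = y2"
begin

text \<open>The mirror instance, with the roles of \<open>X\<close> and \<open>Y\<close> exchanged; its \<open>CA\<close> is the
  m-semilattice \<open>B\<close>.\<close>
sublocale B: morita_triple q p
  by unfold_locales
    (fact thom_q surj_q thom_p surj_p q_assoc_mid q_assoc_right p_assoc_mid p_assoc_right
      q_cancel_last q_cancel_first p_cancel_last p_cancel_first)+

lemmas p_trilinear = thom_cls_gen3_trilinear[OF thom_p]

lemma X_induct[case_names bot gen sup]:
  assumes "\<Phi> bot" "\<And>u v w. \<Phi> (p (tens3 u v w))" "\<And>a b. \<Phi> a \<Longrightarrow> \<Phi> b \<Longrightarrow> \<Phi> (sup a b)"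
  shows "\<Phi> x"
proof -
  have "x \<in> p ` tcarrier gen3" using surj_p by simp
  with thom_p[unfolded thom_cls_iff_thom] show ?thesis
  proof (induct rule: thom_image_induct)
    case (gen t)
    then show ?case using assms(2) by (cases t) auto
  qed (use assms in auto)
qed

end

lemma morita_context_sides:
  assumes "morita_context CA jA zA mA CB jB zB mB lX rX lY rY pr br"
  shows "morita_side CA jA zA mA CB jB zB mB lX rX lY pr br"
    and "morita_side CB jB zB mB CA jA zA mA lY rY lX br pr"
  using assms unfolding morita_context_def morita_side_def by simp_all

lemma morita_context_imp_morita_triple:
  assumes "morita_context CA jA zA mA CB jB zB mB lX rX lY rY pr br"
  shows "morita_triple (triple_action lX pr) (triple_action lY br)"
proof -
  interpret A: morita_side CA jA zA mA CB jB zB mB lX rX lY pr br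
    by (rule morita_context_sides(1)[OF assms])
  interpret B: morita_side CB jB zB mB CA jA zA mA lY rY lX br pr
    by (rule morita_context_sides(2)[OF assms])
  show ?thesis
    by unfold_locales
      (auto simp: A.thom_cls_triple_action B.thom_cls_triple_action A.triple_action_surj B.triple_action_surj
        A.lX_pr_assoc B.lX_pr_assoc intro: A.lX_pr_cancel_last A.lX_pr_cancel_first
        B.lX_pr_cancel_last B.lX_pr_cancel_first)
qed

text \<open>Facts proved in a context reach the mirror instance \<open>B\<close> only after the context is
  re-entered, hence the repeated context blocks below.\<close>

context morita_triple
begin

definition lact :: "('x \<times> 'y) set set \<Rightarrow> 'x \<Rightarrow> 'x" where
  "lact P w = tlift gen2 (\<lambda>(x, y). p (tens3 x y w)) P"

definition ract :: "('x \<times> 'y) set set \<Rightarrow> 'y \<Rightarrow> 'y" where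
  "ract P v = tlift gen2 (\<lambda>(x, y). q (tens3 v x y)) P"

lemma thom_cls_lact: "thom_cls gen2 (\<lambda>P. lact P w)"
  unfolding lact_def
  by (intro thom_cls_tlift finite_rel_gen2 respects_gen2_if_bilinear) (simp_all add: p_trilinear)

lemma thom_cls_ract: "thom_cls gen2 (\<lambda>P. ract P v)"
  unfolding ract_def
  by (intro thom_cls_tlift finite_rel_gen2 respects_gen2_if_bilinear) (simp_all add: B.p_trilinear)

lemma lact_tens2[simp]: "lact (tens2 x y) = (\<lambda>w. p (tens3 x y w))"
  unfolding lact_def fun_eq_iff
  by (subst tlift_tgen[OF finite_rel_gen2 respects_gen2_if_bilinear]) (simp_all add: p_trilinear)

lemma ract_tens2[simp]: "ract (tens2 x y) v = q (tens3 v x y)"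
  unfolding ract_def
  by (subst tlift_tgen[OF finite_rel_gen2 respects_gen2_if_bilinear]) (simp_all add: B.p_trilinear)

lemma lact_tzero[simp]: "lact (tzero gen2) = (\<lambda>w. bot)"
  and lact_tjoin[simp]: "P \<in> tcarrier gen2 \<Longrightarrow> Q \<in> tcarrier gen2 \<Longrightarrow>
    lact (tjoin gen2 P Q) = (\<lambda>w. sup (lact P w) (lact Q w))"
  using thom_cls_lact unfolding thom_cls_def fun_eq_iff by simp_all

lemma ract_tzero[simp]: "ract (tzero gen2) v = bot"
  and ract_tjoin[simp]: "P \<in> tcarrier gen2 \<Longrightarrow> Q \<in> tcarrier gen2 \<Longrightarrow>
    ract (tjoin gen2 P Q) v = sup (ract P v) (ract Q v)"
  using thom_cls_ract unfolding thom_cls_def by simp_all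

lemma lact_sup: "P \<in> tcarrier gen2 \<Longrightarrow> lact P (sup w w') = sup (lact P w) (lact P w')"
  by (induct rule: tcarrier_gen2_induct) (simp_all add: p_trilinear sup_aci)

lemma lact_bot: "P \<in> tcarrier gen2 \<Longrightarrow> lact P bot = bot"
  by (induct rule: tcarrier_gen2_induct) (simp_all add: p_trilinear)

lemma q_ract_eq_q_lact: "P \<in> tcarrier gen2 \<Longrightarrow> q (tens3 (ract P y) u v) = q (tens3 y (lact P u) v)"
  by (induct rule: tcarrier_gen2_induct) (simp_all add: B.p_trilinear q_assoc_mid)

text \<open>Separation makes \<open>ract P\<close> depend on \<open>P\<close> only through \<open>lact P\<close>.\<close>
lemma ract_eqI:
  assumes "P \<in> tcarrier gen2" "\<And>u v. q (tens3 z u v) = q (tens3 y (lact P u) v)"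
  shows "ract P y = z"
  by (rule q_cancel_first) (simp add: assms q_ract_eq_q_lact)

lemma p_lact_eq_lact_p: "P \<in> tcarrier gen2 \<Longrightarrow> p (tens3 (lact P z) v u) = lact P (p (tens3 z v u))"
  by (induct rule: tcarrier_gen2_induct) (simp_all add: p_trilinear p_assoc_mid p_assoc_right)

lemma p_ract_eq_p_lact: "P \<in> tcarrier gen2 \<Longrightarrow> p (tens3 x (ract P y) w) = p (tens3 x y (lact P w))"
  by (induct rule: tcarrier_gen2_induct) (simp_all add: p_trilinear p_assoc_right)

definition lacts :: "('x \<Rightarrow> 'x) set" where
  "lacts = lact ` tcarrier gen2"

lemma lact_in_lacts[simp]: "P \<in> tcarrier gen2 \<Longrightarrow> lact P \<in> lacts"
  unfolding lacts_def by simp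

lemma bot_in_lacts[simp]: "(\<lambda>w. bot) \<in> lacts"
  using lact_in_lacts[OF tzero_in_tcarrier] by simp

lemma p_in_lacts[simp]: "(\<lambda>w. p (tens3 x y w)) \<in> lacts"
  using lact_in_lacts[OF tgen_in_tcarrier, of "(x, y)"] by simp

lemma sup_in_lacts[simp]: "f \<in> lacts \<Longrightarrow> g \<in> lacts \<Longrightarrow> (\<lambda>w. sup (f w) (g w)) \<in> lacts"
  using lact_in_lacts[OF tjoin_in_tcarrier] unfolding lacts_def by auto

lemma lacts_induct[consumes 1, case_names zero gen sup]:
  assumes "f \<in> lacts" "\<Phi> (\<lambda>w. bot)" "\<And>x y. \<Phi> (\<lambda>w. p (tens3 x y w))"
    "\<And>f g. f \<in> lacts \<Longrightarrow> g \<in> lacts \<Longrightarrow> \<Phi> f \<Longrightarrow> \<Phi> g \<Longrightarrow> \<Phi> (\<lambda>w. sup (f w) (g w))"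
  shows "\<Phi> f"
proof -
  obtain P where "P \<in> tcarrier gen2" "f = lact P" using assms(1) unfolding lacts_def by auto
  moreover have "\<Phi> (lact P)" if "P \<in> tcarrier gen2" for P
    using that
  proof (induct rule: tcarrier_gen2_induct)
    case zero
    then show ?case using assms(2) by simp
  next
    case (gen x y)
    then show ?case using assms(3) by simp
  next
    case (join P Q)
    then show ?case using assms(4)[of "lact P" "lact Q"] by simp
  qed
  ultimately show ?thesis by simp
qed

lemma comp_in_lacts[simp]: "f \<in> lacts \<Longrightarrow> g \<in> lacts \<Longrightarrow> (\<lambda>w. f (g w)) \<in> lacts"
proof (induct f rule: lacts_induct)
  case (gen x y)
  from gen show ?case
  proof (induct g rule: lacts_induct)
    case (gen x' y')
    then show ?case by (simp add: p_assoc_right[symmetric])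
  qed (simp_all add: p_trilinear)
qed simp_all

text \<open>The m-semilattice \<open>A\<close> is \<open>lacts\<close> under pointwise join and composition, carried by chosen
  representatives in \<open>X \<otimes> Y\<close>.\<close>

definition rep :: "('x \<Rightarrow> 'x) \<Rightarrow> ('x \<times> 'y) set set" where
  "rep f = (SOME P. P \<in> tcarrier gen2 \<and> lact P = f)"

definition CA :: "('x \<times> 'y) set set set" where
  "CA = rep ` lacts"

definition jA :: "('x \<times> 'y) set set \<Rightarrow> ('x \<times> 'y) set set \<Rightarrow> ('x \<times> 'y) set set" where
  "jA a b = rep (\<lambda>w. sup (lact a w) (lact b w))"

definition zA :: "('x \<times> 'y) set set" where
  "zA = rep (\<lambda>w. bot)"

definition mA :: "('x \<times> 'y) set set \<Rightarrow> ('x \<times> 'y) set set \<Rightarrow> ('x \<times> 'y) set set" where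
  "mA a b = rep (\<lambda>w. lact a (lact b w))"

definition prA :: "'x \<Rightarrow> 'y \<Rightarrow> ('x \<times> 'y) set set" where
  "prA x y = rep (\<lambda>w. p (tens3 x y w))"

lemma rep_in_tcarrier: "f \<in> lacts \<Longrightarrow> rep f \<in> tcarrier gen2"
  and lact_rep[simp]: "f \<in> lacts \<Longrightarrow> lact (rep f) = f"
  using someI_ex[of "\<lambda>P. P \<in> tcarrier gen2 \<and> lact P = f"] unfolding rep_def lacts_def by auto

lemma rep_in_CA[simp]: "f \<in> lacts \<Longrightarrow> rep f \<in> CA"
  unfolding CA_def by simp

lemma CA_subset_tcarrier[simp]: "a \<in> CA \<Longrightarrow> a \<in> tcarrier gen2"
  unfolding CA_def using rep_in_tcarrier by auto

lemma rep_lact[simp]: "a \<in> CA \<Longrightarrow> rep (lact a) = a"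
  unfolding CA_def by auto

lemma CA_eq_iff: "a \<in> CA \<Longrightarrow> b \<in> CA \<Longrightarrow> a = b \<longleftrightarrow> lact a = lact b"
  by (metis rep_lact)

lemma jA_in_CA[simp]: "a \<in> CA \<Longrightarrow> b \<in> CA \<Longrightarrow> jA a b \<in> CA"
  and zA_in_CA[simp]: "zA \<in> CA"
  and mA_in_CA[simp]: "a \<in> CA \<Longrightarrow> b \<in> CA \<Longrightarrow> mA a b \<in> CA"
  and prA_in_CA[simp]: "prA x y \<in> CA"
  unfolding jA_def zA_def mA_def prA_def by simp_all

lemma lact_jA[simp]: "a \<in> CA \<Longrightarrow> b \<in> CA \<Longrightarrow> lact (jA a b) = (\<lambda>w. sup (lact a w) (lact b w))"
  and lact_zA[simp]: "lact zA = (\<lambda>w. bot)"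
  and lact_mA[simp]: "a \<in> CA \<Longrightarrow> b \<in> CA \<Longrightarrow> lact (mA a b) = (\<lambda>w. lact a (lact b w))"
  and lact_prA[simp]: "lact (prA x y) = (\<lambda>w. p (tens3 x y w))"
  unfolding jA_def zA_def mA_def prA_def by simp_all

lemma lact_sup_CA[simp]: "a \<in> CA \<Longrightarrow> lact a (sup u v) = sup (lact a u) (lact a v)"
  and lact_bot_CA[simp]: "a \<in> CA \<Longrightarrow> lact a bot = bot"
  by (simp_all add: lact_sup lact_bot)

lemma msl_A: "msl CA jA zA mA"
  unfolding msl_def jsl_def by (auto simp: CA_eq_iff sup_aci)

definition sums_of_products :: "('x \<times> 'y) set set set" where
  "sums_of_products = {a. \<exists>ps. set ps \<subseteq> CA \<times> CA \<and> a = foldr (\<lambda>(b, c) acc. jA (mA b c) acc) ps zA}"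

lemma foldr_products_in_CA:
  "set ps \<subseteq> CA \<times> CA \<Longrightarrow> acc \<in> CA \<Longrightarrow> foldr (\<lambda>(b, c) acc. jA (mA b c) acc) ps acc \<in> CA"
  by (induct ps) auto

lemma foldr_products_acc:
  "set ps \<subseteq> CA \<times> CA \<Longrightarrow> acc \<in> CA \<Longrightarrow>
    foldr (\<lambda>(b, c) acc. jA (mA b c) acc) ps acc = jA (foldr (\<lambda>(b, c) acc. jA (mA b c) acc) ps zA) acc"
proof (induct ps)
  case Nil
  then show ?case by (simp add: CA_eq_iff)
next
  case (Cons bc ps)
  then show ?case by (cases bc) (simp add: CA_eq_iff foldr_products_in_CA sup_assoc)
qed

lemma zA_in_sums_of_products: "zA \<in> sums_of_products"
  unfolding sums_of_products_def by (auto intro: exI[of _ "[]"])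

lemma mA_in_sums_of_products:
  assumes "b \<in> CA" "c \<in> CA"
  shows "mA b c \<in> sums_of_products"
proof -
  have "mA b c = foldr (\<lambda>(b, c) acc. jA (mA b c) acc) [(b, c)] zA"
    using assms by (simp add: CA_eq_iff)
  then show ?thesis
    unfolding sums_of_products_def using assms by (intro CollectI exI[of _ "[(b, c)]"]) simp
qed

lemma jA_in_sums_of_products:
  assumes "a \<in> sums_of_products" "b \<in> sums_of_products"
  shows "jA a b \<in> sums_of_products"
proof -
  obtain ps where ps: "set ps \<subseteq> CA \<times> CA" "a = foldr (\<lambda>(b, c) acc. jA (mA b c) acc) ps zA"
    using assms(1) unfolding sums_of_products_def mem_Collect_eq by (elim exE conjE) (rule that)
  obtain qs where qs: "set qs \<subseteq> CA \<times> CA" "b = foldr (\<lambda>(b, c) acc. jA (mA b c) acc) qs zA"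
    using assms(2) unfolding sums_of_products_def mem_Collect_eq by (elim exE conjE) (rule that)
  have "jA a b = foldr (\<lambda>(b, c) acc. jA (mA b c) acc) (ps @ qs) zA"
    using foldr_products_acc[OF ps(1) foldr_products_in_CA[OF qs(1) zA_in_CA]] by (simp add: ps(2) qs(2))
  moreover have "set (ps @ qs) \<subseteq> CA \<times> CA" using ps qs by auto
  ultimately show ?thesis
    unfolding sums_of_products_def by (intro CollectI exI[of _ "ps @ qs"] conjI)
qed

text \<open>Essentiality of \<open>A\<close>: the generator \<open>x \<otimes> y\<close> acts as a join of products, because \<open>x\<close> is
  a join of elements \<open>p (u \<otimes> v \<otimes> w)\<close>.\<close>
lemma rep_in_sums_of_products: "f \<in> lacts \<Longrightarrow> rep f \<in> sums_of_products"
proof (induct f rule: lacts_induct)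
  case zero
  then show ?case using zA_in_sums_of_products by (simp add: zA_def)
next
  case (gen x y)
  show ?case
  proof (induct x rule: X_induct)
    case bot
    then show ?case using zA_in_sums_of_products by (simp add: zA_def p_trilinear)
  next
    case (gen u v w')
    have "rep (\<lambda>w. p (tens3 (p (tens3 u v w')) y w)) = mA (prA u v) (prA w' y)"
      by (simp add: mA_def p_assoc_mid p_assoc_right)
    then show ?case using mA_in_sums_of_products by simp
  next
    case (sup a b)
    have "rep (\<lambda>w. p (tens3 (sup a b) y w)) = jA (prA a y) (prA b y)"
      by (simp add: jA_def p_trilinear prA_def)
    then show ?case using jA_in_sums_of_products sup by (simp add: prA_def)
  qed
next
  case (sup f g)
  then have "rep (\<lambda>w. sup (f w) (g w)) = jA (rep f) (rep g)" by (simp add: jA_def)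
  then show ?case using jA_in_sums_of_products sup by simp
qed

lemma CA_eqI:
  assumes "a \<in> CA" "b \<in> CA" "\<And>u v w. lact a (p (tens3 u v w)) = lact b (p (tens3 u v w))"
  shows "a = b"
proof -
  have "lact a z = lact b z" for z
    by (induct z rule: X_induct) (simp_all add: assms)
  with assms(1,2) show ?thesis by (simp add: CA_eq_iff fun_eq_iff)
qed

lemma msl_regular_A: "msl_regular CA jA zA mA"
  unfolding msl_regular_def
proof (intro conjI ballI impI msl_A)
  fix a
  assume "a \<in> CA"
  then have "rep (lact a) \<in> sums_of_products" by (intro rep_in_sums_of_products) simp
  with \<open>a \<in> CA\<close> show "\<exists>ps. set ps \<subseteq> CA \<times> CA \<and> a = foldr (\<lambda>(b, c) acc. jA (mA b c) acc) ps zA"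
    unfolding sums_of_products_def by simp
next
  fix a b
  assume ab: "a \<in> CA" "b \<in> CA" and "\<forall>c\<in>CA. mA a c = mA b c"
  then have "lact (mA a (prA u v)) w = lact (mA b (prA u v)) w" for u v w
    by simp
  with ab show "a = b"
    by (intro CA_eqI) simp_all
next
  fix a b
  assume ab: "a \<in> CA" "b \<in> CA" and "\<forall>c\<in>CA. mA c a = mA c b"
  then have "lact (mA (prA u v) a) w = lact (mA (prA u v) b) w" for u v w
    by simp
  with ab have "p (tens3 u v (lact a w)) = p (tens3 u v (lact b w))" for u v w
    by simp
  then have "lact a w = lact b w" for w
    by (rule p_cancel_last)
  with ab show "a = b" by (simp add: CA_eq_iff fun_eq_iff)
qed

lemma lmod_regular_A: "lmod_regular CA jA zA mA lact"
  unfolding lmod_regular_def lmod_def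
proof (intro conjI allI ballI impI)
  fix x :: 'x
  show "\<exists>ps. fst ` set ps \<subseteq> CA \<and> x = foldr (\<lambda>(a, y) acc. sup (lact a y) acc) ps bot"
  proof (induct x rule: X_induct)
    case bot
    then show ?case by (auto intro: exI[of _ "[]"])
  next
    case (gen u v w)
    then show ?case by (auto intro!: exI[of _ "[(prA u v, w)]"])
  next
    case (sup a b)
    then obtain ps qs where "fst ` set ps \<subseteq> CA" "a = foldr (\<lambda>(a, y) acc. sup (lact a y) acc) ps bot"
      "fst ` set qs \<subseteq> CA" "b = foldr (\<lambda>(a, y) acc. sup (lact a y) acc) qs bot"
      by blast
    then show ?case by (intro exI[of _ "ps @ qs"]) (simp add: sup_foldr_sup image_Un)
  qed
next
  fix x y :: 'x
  assume sep: "\<forall>a\<in>CA. lact a x = lact a y"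
  show "x = y"
  proof (rule p_cancel_last)
    show "p (tens3 u v x) = p (tens3 u v y)" for u v
      using sep[rule_format, of "prA u v"] by simp
  qed
qed simp_all

lemma ract_prA[simp]: "ract (prA u w) v = q (tens3 v u w)"
  by (rule ract_eqI) (simp_all add: q_assoc_mid)

lemma rmod_regular_A: "rmod_regular CA jA zA mA (\<lambda>y a. ract a y)"
  unfolding rmod_regular_def rmod_def
proof (intro conjI allI ballI impI)
  fix y :: 'y
  show "\<exists>ps. snd ` set ps \<subseteq> CA \<and> y = foldr (\<lambda>(y, a) acc. sup (ract a y) acc) ps bot"
  proof (induct y rule: B.X_induct)
    case bot
    then show ?case by (auto intro: exI[of _ "[]"])
  next
    case (gen v u w)
    then show ?case by (auto intro!: exI[of _ "[(v, prA u w)]"])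
  next
    case (sup a b)
    then obtain ps qs where "snd ` set ps \<subseteq> CA" "a = foldr (\<lambda>(y, a) acc. sup (ract a y) acc) ps bot"
      "snd ` set qs \<subseteq> CA" "b = foldr (\<lambda>(y, a) acc. sup (ract a y) acc) qs bot"
      by blast
    then show ?case by (intro exI[of _ "ps @ qs"]) (simp add: sup_foldr_sup image_Un)
  qed
next
  fix y z :: 'y
  assume sep: "\<forall>a\<in>CA. ract a y = ract a z"
  show "y = z"
  proof (rule q_cancel_first)
    show "q (tens3 y u v) = q (tens3 z u v)" for u v
      using sep[rule_format, of "prA u v"] by simp
  qed
qed (rule ract_eqI; simp add: q_ract_eq_q_lact B.p_trilinear)+

lemma prA_sup_left: "prA (sup x x') y = jA (prA x y) (prA x' y)"
  and prA_bot_left: "prA bot y = zA"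
  and prA_sup_right: "prA x (sup y y') = jA (prA x y) (prA x y')"
  and prA_bot_right: "prA x bot = zA"
  and prA_lact: "a \<in> CA \<Longrightarrow> prA (lact a x) y = mA a (prA x y)"
  and prA_ract: "a \<in> CA \<Longrightarrow> prA x (ract a y) = mA (prA x y) a"
  by (simp_all add: CA_eq_iff fun_eq_iff p_trilinear p_lact_eq_lact_p p_ract_eq_p_lact)

lemma prA_onto: "\<exists>h. thom gen2 CA jA zA h \<and> (\<forall>x y. h (tens2 x y) = prA x y) \<and> h ` tcarrier gen2 = CA"
proof (intro exI conjI allI)
  show "thom gen2 CA jA zA (\<lambda>P. rep (lact P))"
    unfolding thom_def
    by (simp add: CA_eq_iff image_subset_iff tjoin_in_tcarrier tzero_in_tcarrier zA_def[symmetric])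
  show "rep (lact (tens2 x y)) = prA x y" for x y
    by (simp add: prA_def)
  show "(\<lambda>P. rep (lact P)) ` tcarrier gen2 = CA"
    unfolding CA_def lacts_def by (simp add: image_image)
qed

end

context morita_triple
begin

lemma ract_lact_commute:
  assumes "a \<in> CA" "b \<in> B.CA"
  shows "B.ract b (lact a x) = lact a (B.ract b x)"
  by (rule B.ract_eqI) (use assms in \<open>simp_all add: p_lact_eq_lact_p B.q_ract_eq_q_lact\<close>)

lemma prA_balanced: "b \<in> B.CA \<Longrightarrow> prA (B.ract b x) y = prA x (B.lact b y)"
  by (simp add: prA_def B.q_ract_eq_q_lact)

end

context morita_triple
begin

lemma morita_context_A_B:
  "morita_context CA jA zA mA B.CA B.jA B.zA B.mA
     lact (\<lambda>x b. B.ract b x) B.lact (\<lambda>y a. ract a y) prA B.prA"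
  unfolding morita_context_def
  by (simp add: msl_regular_A B.msl_regular_A lmod_regular_A B.lmod_regular_A
      rmod_regular_A B.rmod_regular_A ract_lact_commute B.ract_lact_commute
      prA_sup_left prA_bot_left prA_sup_right prA_bot_right prA_lact prA_ract
      B.prA_sup_left B.prA_bot_left B.prA_sup_right B.prA_bot_right B.prA_lact B.prA_ract
      prA_balanced B.prA_balanced B.ract_prA ract_prA prA_onto B.prA_onto)

lemma morita_pair:
  fixes X :: "'x itself" and Y :: "'y itself"
  shows "morita_pair TYPE(('x \<times> 'y) set set) TYPE(('y \<times> 'x) set set) X Y"
  unfolding morita_pair_def by (intro exI) (rule morita_context_A_B)

end

theorem corollary1:
  fixes X :: "'x::bounded_semilattice_sup_bot itself"
    and Y :: "'y::bounded_semilattice_sup_bot itself"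
  defines "RHS \<equiv> (\<exists>(p :: ('x \<times> 'y \<times> 'x) set set \<Rightarrow> 'x) (q :: ('y \<times> 'x \<times> 'y) set set \<Rightarrow> 'y).
      thom_cls gen3 p \<and> p ` tcarrier gen3 = UNIV \<and>
      thom_cls gen3 q \<and> q ` tcarrier gen3 = UNIV \<and>
      (\<forall>x1 x2 x3 y1 y2.
          p (tens3 (p (tens3 x1 y1 x2)) y2 x3) = p (tens3 x1 (q (tens3 y1 x2 y2)) x3) \<and>
          p (tens3 x1 (q (tens3 y1 x2 y2)) x3) = p (tens3 x1 y1 (p (tens3 x2 y2 x3)))) \<and>
      (\<forall>x1 x2 y1 y2 y3.
          q (tens3 (q (tens3 y1 x1 y2)) x2 y3) = q (tens3 y1 (p (tens3 x1 y2 x2)) y3) \<and>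
          q (tens3 y1 (p (tens3 x1 y2 x2)) y3) = q (tens3 y1 x1 (q (tens3 y2 x2 y3)))) \<and>
      (\<forall>x1 x2. (\<forall>u v. p (tens3 u v x1) = p (tens3 u v x2)) \<longrightarrow> x1 = x2) \<and>
      (\<forall>x1 x2. (\<forall>u v. p (tens3 x1 v u) = p (tens3 x2 v u)) \<longrightarrow> x1 = x2) \<and>
      (\<forall>y1 y2. (\<forall>v u. q (tens3 v u y1) = q (tens3 v u y2)) \<longrightarrow> y1 = y2) \<and>
      (\<forall>y1 y2. (\<forall>u v. q (tens3 y1 u v) = q (tens3 y2 u v)) \<longrightarrow> y1 = y2))"
  shows "(morita_pair TYPE('a) TYPE('b) X Y \<longrightarrow> RHS) \<and>
         (RHS \<longrightarrow> morita_pair TYPE(('x \<times> 'y) set set) TYPE(('y \<times> 'x) set set) X Y)"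
proof -
  have RHS_iff: "RHS \<longleftrightarrow> (\<exists>(p :: ('x \<times> 'y \<times> 'x) set set \<Rightarrow> 'x) q. morita_triple p q)"
    unfolding RHS_def morita_triple_def by (intro ex_cong1) (simp only: all_conj_distrib, meson)
  have "RHS" if "morita_pair TYPE('a) TYPE('b) X Y"
  proof -
    from that obtain CA :: "'a set" and jA zA mA and CB :: "'b set" and jB zB mB
      and lX :: "'a \<Rightarrow> 'x \<Rightarrow> 'x" and rX and lY :: "'b \<Rightarrow> 'y \<Rightarrow> 'y" and rY and pr br
      where "morita_context CA jA zA mA CB jB zB mB lX rX lY rY pr br"
      unfolding morita_pair_def by blast
    then have "morita_triple (triple_action lX pr) (triple_action lY br)"
      by (rule morita_context_imp_morita_triple)
    then show ?thesis
      unfolding RHS_iff by blast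
  qed
  moreover have "morita_pair TYPE(('x \<times> 'y) set set) TYPE(('y \<times> 'x) set set) X Y" if "RHS"
    using that unfolding RHS_iff by (blast intro: morita_triple.morita_pair)
  ultimately show ?thesis by blast
qed

end
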